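(* Let $X$ be a real random variable taking values in the interval $\mathcal{I}\subseteq\mathbb{R}$, and let $h:\mathcal{I}\to\mathcal{J}$ have a non-decreasing upper tail with threshold $c\in(\inf\mathcal{I},\sup\mathcal{I})$. Let $h^{\star}=\sup_{x<c,\,x\in\mathcal{I}}h(x)$, $\pi_c=\mathbb{P}[h(X)\le h^{\star}]$, and define $\tilde h:\mathcal{I}\to\mathcal{J}$ by $\tilde h(x)=h^{\star}$ if $x<c$, $\tilde h(c)=\max\{h(c),h^{\star}\}$, and $\tilde h(x)=h(x)$ if $x>c$. Then $$\tilde h\big(F_X^{-1(\alpha)}(p)\big)=h\big(F_X^{-1(\alpha)}(p)\big)\quad\text{for all } p>\pi_c \text{ and } \alpha\in[0,1].$$
   Context: For a random variable $Y$ with cdf $F_Y$: $F_Y^{-1}(p)=\inf\{x\in\mathbb{R}: F_Y(x)\ge p\}$ (with $\inf\emptyset=+\infty$), $F_Y^{-1+}(p)=\sup\{x\in\mathbb{R}:F_Y(x)\le p\}$ (with $\sup\emptyset=-\infty$), and for $\alpha\in[0,1]$, $F_Y^{-1(\alpha)}(p)=(1-\alpha)F_Y^{-1}(p)+\alpha F_Y^{-1+}(p)$. $h$ is real-valued whose discontinuities (if any) are jumps at which it is left- or right-continuous. A function $h:\mathcal{I}\to\mathcal{J}$ has a non-decreasing upper tail if there exists $x'\in\mathcal{I}$ such that (1) $h(x)\le h(x')$ for all $x\in\mathcal{I}$ with $x<x'$, and (2) $h(x_1)\le h(x_2)$ for all $x_1,x_2\in\mathcal{I}$ with $x'\le x_1\le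 x_2$. Its threshold $c$ is the infimum of the (assumed nonempty) set of all such $x'$. *)

theory Defs
  imports "HOL-Probability.Probability"
begin

definition nd_upper_tail_at :: "real set \<Rightarrow> (real \<Rightarrow> real) \<Rightarrow> real \<Rightarrow> bool" where
  "nd_upper_tail_at I h x' \<longleftrightarrow> x' \<in> I \<and>
     (\<forall>x\<in>I. x < x' \<longrightarrow> h x \<le> h x') \<and>
     (\<forall>x1\<in>I. \<forall>x2\<in>I. x' \<le> x1 \<and> x1 \<le> x2 \<longrightarrow> h x1 \<le> h x2)"

definition has_nd_upper_tail :: "real set \<Rightarrow> (real \<Rightarrow> real) \<Rightarrow> bool" where
  "has_nd_upper_tail I h \<longleftrightarrow> (\<exists>x'. nd_upper_tail_at I h x')"

definition nd_threshold :: "real set \<Rightarrow> (real \<Rightarrow> real) \<Rightarrow> real" where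
  "nd_threshold I h = Inf {x'. nd_upper_tail_at I h x'}"

definition jump_regular :: "real set \<Rightarrow> (real \<Rightarrow> real) \<Rightarrow> bool" where
  "jump_regular I h \<longleftrightarrow> (\<forall>x\<in>I.
      (\<exists>L. (h \<longlongrightarrow> L) (at x within (I \<inter> {..<x}))) \<and>
      (\<exists>R. (h \<longlongrightarrow> R) (at x within (I \<inter> {x<..}))) \<and>
      (continuous (at x within (I \<inter> {..<x})) h \<or> continuous (at x within (I \<inter> {x<..})) h))"

(* generalized inverses of a cdf F (used for p in (0,1), where they are finite) *)
definition quantile_lower :: "(real \<Rightarrow> real) \<Rightarrow> real \<Rightarrow> real" where
  "quantile_lower F p = Inf {x. F x \<ge> p}"

definition quantile_upper :: "(real \<Rightarrow> real) \<Rightarrow> real \<Rightarrow> real" where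
  "quantile_upper F p = Sup {x. F x \<le> p}"

definition quantile_alpha :: "(real \<Rightarrow> real) \<Rightarrow> real \<Rightarrow> real \<Rightarrow> real" where
  "quantile_alpha F \<alpha> p = (1 - \<alpha>) * quantile_lower F p + \<alpha> * quantile_upper F p"

end

theory Submission
  imports Defs
begin

text \<open>
  Let \<open>c\<close> be the threshold and \<open>B\<close> the event \<open>h(X) \<le> h\<^sup>\<star>\<close>. As \<open>h \<le> h\<^sup>\<star>\<close> on \<open>I\<close> below \<open>c\<close>,
  every \<open>t < c\<close> has \<open>{X \<le> t} \<subseteq> B\<close>, so \<open>F t \<le> \<pi>\<^sub>c < p\<close> and every quantile of level \<open>p\<close>
  is at least \<open>c\<close>. By right continuity a quantile equal to \<open>c\<close> forces \<open>F c \<ge> p\<close>, hence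
  \<open>h c > h\<^sup>\<star>\<close>, since otherwise also \<open>{X \<le> c} \<subseteq> B\<close>. Either way the modified function agrees
  with \<open>h\<close> at the quantile.
\<close>

lemma nd_upper_tail_le_beyond_threshold:
  assumes "has_nd_upper_tail I h" "x \<in> I" "y \<in> I" "x \<le> y" "nd_threshold I h < y"
  shows "h x \<le> h y"
proof -
  have "{x'. nd_upper_tail_at I h x'} \<noteq> {}"
    using assms(1) unfolding has_nd_upper_tail_def by blast
  then obtain x' where x': "nd_upper_tail_at I h x'" "x' < y"
    using cInf_lessD[of _ y] assms(5) unfolding nd_threshold_def by blast
  show ?thesis
  proof (cases "x' \<le> x")
    case True
    then show ?thesis using x' assms(2-4) unfolding nd_upper_tail_at_def by simp
  next
    case False
    then have "h x \<le> h x'" using x' assms(2) unfolding nd_upper_tail_at_def by auto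
    also have "h x' \<le> h y" using x' assms(3) unfolding nd_upper_tail_at_def by auto
    finally show ?thesis .
  qed
qed

lemma nd_upper_tail_mono_on_threshold:
  assumes "has_nd_upper_tail I h"
  shows "mono_on {x\<in>I. nd_threshold I h \<le> x} h"
proof (rule mono_onI)
  fix x y assume "x \<in> {x\<in>I. nd_threshold I h \<le> x}" "y \<in> {x\<in>I. nd_threshold I h \<le> x}" "x \<le> y"
  then show "h x \<le> h y"
    using nd_upper_tail_le_beyond_threshold[OF assms, of x y] by (cases "x = y") auto
qed

lemma bdd_above_below_nd_threshold:
  assumes "has_nd_upper_tail I h" "b \<in> I" "nd_threshold I h < b"
  shows "bdd_above (h ` {x\<in>I. x < nd_threshold I h})"
  using nd_upper_tail_le_beyond_threshold[OF assms(1) _ assms(2) _ assms(3)] assms(3)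
  by (intro bdd_aboveI2[of _ _ "h b"]) auto

lemma is_interval_sublevel_nd_upper_tail:
  assumes "is_interval I" "has_nd_upper_tail I h"
    and below: "\<And>x. x \<in> I \<Longrightarrow> x < nd_threshold I h \<Longrightarrow> h x \<le> t"
  shows "is_interval {x\<in>I. h x \<le> t}"
  unfolding is_interval_1
proof (intro ballI allI impI)
  fix x y z assume x: "x \<in> {x\<in>I. h x \<le> t}" and z: "z \<in> {x\<in>I. h x \<le> t}"
    and y: "x \<le> y \<and> y \<le> z"
  have "y \<in> I" using assms(1) x z y unfolding is_interval_1 by blast
  moreover have "h y \<le> t"
  proof (cases "y < nd_threshold I h")
    case False
    then have "h y \<le> h z"
      using mono_onD[OF nd_upper_tail_mono_on_threshold[OF assms(2)]] \<open>y \<in> I\<close> z y by auto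
    then show ?thesis using z by simp
  qed (use below \<open>y \<in> I\<close> in auto)
  ultimately show "y \<in> {x\<in>I. h x \<le> t}" by simp
qed

lemma (in prob_space) sublevel_event_nd_upper_tail:
  assumes "X \<in> borel_measurable M" "\<forall>\<omega>\<in>space M. X \<omega> \<in> I" "is_interval I" "has_nd_upper_tail I h"
    and "\<And>x. x \<in> I \<Longrightarrow> x < nd_threshold I h \<Longrightarrow> h x \<le> t"
  shows "{\<omega>\<in>space M. h (X \<omega>) \<le> t} \<in> events"
proof -
  have "{x\<in>I. h x \<le> t} \<in> sets borel"
    using is_interval_sublevel_nd_upper_tail[OF assms(3-5)] by (rule real_interval_borel_measurable)
  moreover have "{\<omega>\<in>space M. h (X \<omega>) \<le> t} = X -` {x\<in>I. h x \<le> t} \<inter> space M"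
    using assms(2) by auto
  ultimately show ?thesis using measurable_sets[OF assms(1)] by metis
qed

lemma (in prob_space) cdf_distr_le_prob:
  assumes "X \<in> borel_measurable M" "B \<in> events" "{\<omega>\<in>space M. X \<omega> \<le> t} \<subseteq> B"
  shows "cdf (distr M borel X) t \<le> prob B"
proof -
  have "cdf (distr M borel X) t = prob {\<omega>\<in>space M. X \<omega> \<le> t}"
    unfolding cdf_def using assms(1)
    by (subst measure_distr) (auto simp: vimage_def Int_def conj_commute)
  also have "\<dots> \<le> prob B" using assms(3,2) by (rule finite_measure_mono)
  finally show ?thesis .
qed

context real_distribution
begin

lemma cdf_ge_nonempty: "p < 1 \<Longrightarrow> {x. p \<le> cdf M x} \<noteq> {}"
  using order_tendstoD(1)[OF cdf_lim_at_top_prob, of p]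
  by (auto simp: eventually_at_top_linorder intro: less_imp_le)

lemma bdd_below_cdf_ge: "0 < p \<Longrightarrow> bdd_below {x. p \<le> cdf M x}"
  using order_tendstoD(2)[OF cdf_lim_at_bot, of p]
  by (auto simp: eventually_at_bot_linorder bdd_below_def) (meson linorder_not_le nle_le)

lemma bdd_above_cdf_le: "p < 1 \<Longrightarrow> bdd_above {x. cdf M x \<le> p}"
  using order_tendstoD(1)[OF cdf_lim_at_top_prob, of p]
  by (auto simp: eventually_at_top_linorder bdd_above_def) (meson linorder_not_le nle_le)

lemma quantile_lower_le_quantile_upper:
  assumes "0 < p" "p < 1"
  shows "quantile_lower (cdf M) p \<le> quantile_upper (cdf M) p"
  unfolding quantile_lower_def quantile_upper_def
proof (rule dense_le)
  fix x assume "x < Inf {x. p \<le> cdf M x}"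
  then have "cdf M x \<le> p"
    using cInf_lower[OF _ bdd_below_cdf_ge[OF assms(1)], of x] by fastforce
  then show "x \<le> Sup {x. cdf M x \<le> p}"
    using cSup_upper[OF _ bdd_above_cdf_le[OF assms(2)]] by blast
qed

lemma quantile_lower_le_quantile_alpha:
  assumes "0 < p" "p < 1" "0 \<le> \<alpha>" "\<alpha> \<le> 1"
  shows "quantile_lower (cdf M) p \<le> quantile_alpha (cdf M) \<alpha> p"
proof -
  have "\<alpha> * quantile_lower (cdf M) p \<le> \<alpha> * quantile_upper (cdf M) p"
    using quantile_lower_le_quantile_upper[OF assms(1,2)] assms(3) by (rule mult_left_mono)
  then show ?thesis unfolding quantile_alpha_def by (simp add: algebra_simps)
qed

lemma le_quantile_lower:
  assumes "p < 1" "\<And>t. t < c \<Longrightarrow> cdf M t < p"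
  shows "c \<le> quantile_lower (cdf M) p"
  unfolding quantile_lower_def using cdf_ge_nonempty[OF assms(1)] assms(2)
  by (intro cInf_greatest) (auto simp: not_less[symmetric])

lemma le_cdf_quantile_lower:
  assumes "p < 1"
  shows "p \<le> cdf M (quantile_lower (cdf M) p)"
proof -
  let ?q = "quantile_lower (cdf M) p"
  have above: "p \<le> cdf M y" if "?q < y" for y
  proof -
    obtain x where "p \<le> cdf M x" "x < y"
      using cInf_lessD[OF cdf_ge_nonempty[OF assms] \<open>?q < y\<close>[unfolded quantile_lower_def]]
      by blast
    then show ?thesis using cdf_nondecreasing[of x y] by simp
  qed
  have "\<forall>\<^sub>F y in at_right ?q. p \<le> cdf M y"
    using eventually_at_right_less by (rule eventually_mono) (rule above)
  moreover have "(cdf M \<longlongrightarrow> cdf M ?q) (at_right ?q)"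
    using cdf_is_right_cont[of ?q] unfolding continuous_within by simp
  ultimately show ?thesis by (intro tendsto_lowerbound) auto
qed

lemma quantile_alpha_ge:
  assumes "0 < p" "p < 1" "0 \<le> \<alpha>" "\<alpha> \<le> 1" "\<And>t. t < c \<Longrightarrow> cdf M t < p"
  shows "c \<le> quantile_alpha (cdf M) \<alpha> p"
proof -
  have "c \<le> quantile_lower (cdf M) p" by (rule le_quantile_lower) (use assms in auto)
  with quantile_lower_le_quantile_alpha[OF assms(1-4)] show ?thesis by linarith
qed

lemma quantile_alpha_gt:
  assumes "0 < p" "p < 1" "0 \<le> \<alpha>" "\<alpha> \<le> 1" "cdf M c < p"
  shows "c < quantile_alpha (cdf M) \<alpha> p"
proof -
  have "cdf M t < p" if "t < c" for t
    using cdf_nondecreasing[of t c] that assms(5) by linarith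
  with assms(2) have "c \<le> quantile_lower (cdf M) p" by (rule le_quantile_lower)
  moreover have "quantile_lower (cdf M) p \<noteq> c"
    using le_cdf_quantile_lower[OF assms(2)] assms(5) by auto
  ultimately show ?thesis using quantile_lower_le_quantile_alpha[OF assms(1-4)] by linarith
qed

end

theorem lemma3p4:
  fixes M :: "'a measure" and X :: "'a \<Rightarrow> real" and I :: "real set" and h :: "real \<Rightarrow> real"
  assumes "prob_space M"
    and "X \<in> borel_measurable M"
    and "is_interval I"
    and "\<forall>\<omega>\<in>space M. X \<omega> \<in> I"
    and "jump_regular I h"
    and "has_nd_upper_tail I h"
    and "\<exists>a\<in>I. a < nd_threshold I h"
    and "\<exists>b\<in>I. nd_threshold I h < b"
  shows "let c = nd_threshold I h;
             hstar = Sup (h ` {x\<in>I. x < c});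
             \<pi>c = measure M {\<omega>\<in>space M. h (X \<omega>) \<le> hstar};
             htilde = (\<lambda>x. if x < c then hstar else if x = c then max (h c) hstar else h x);
             F = cdf (distr M borel X)
         in \<forall>p \<alpha>. \<pi>c < p \<and> p < 1 \<and> 0 \<le> \<alpha> \<and> \<alpha> \<le> 1 \<longrightarrow>
              htilde (quantile_alpha F \<alpha> p) = h (quantile_alpha F \<alpha> p)"
proof -
  interpret prob_space M by fact
  define D where "D = distr M borel X"
  interpret D: real_distribution D unfolding D_def using assms(2) by simp
  define c where "c = nd_threshold I h"
  define hstar where "hstar = Sup (h ` {x\<in>I. x < c})"
  define B where "B = {\<omega>\<in>space M. h (X \<omega>) \<le> hstar}"
  have below: "h x \<le> hstar" if "x \<in> I" "x < c" for x
    using bdd_above_below_nd_threshold[OF assms(6)] assms(8) that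
    unfolding hstar_def c_def by (auto intro: cSup_upper)
  then have "B \<in> events"
    unfolding B_def c_def using assms(2-4,6) by (intro sublevel_event_nd_upper_tail) auto
  then have cdf_le: "cdf D t \<le> prob B" if "\<forall>\<omega>\<in>space M. X \<omega> \<le> t \<longrightarrow> h (X \<omega>) \<le> hstar" for t
    unfolding D_def using assms(2) that by (intro cdf_distr_le_prob) (auto simp: B_def)
  show ?thesis
    unfolding Let_def c_def[symmetric] hstar_def[symmetric] B_def[symmetric] D_def[symmetric]
  proof (intro allI impI)
    fix p \<alpha> :: real
    let ?q = "quantile_alpha (cdf D) \<alpha> p"
    assume p\<alpha>: "prob B < p \<and> p < 1 \<and> 0 \<le> \<alpha> \<and> \<alpha> \<le> 1"
    then have "0 < p" using measure_nonneg[of M B] by linarith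
    have "cdf D t < p" if "t < c" for t
      using cdf_le[of t] below assms(4) that p\<alpha> by fastforce
    then have "c \<le> ?q" using p\<alpha> by (intro D.quantile_alpha_ge[OF \<open>0 < p\<close>]) auto
    moreover have "hstar < h c" if "?q = c"
    proof (rule ccontr)
      assume "\<not> hstar < h c"
      then have "cdf D c \<le> prob B" using below assms(4) by (intro cdf_le) (force simp: le_less)
      then show False using D.quantile_alpha_gt[OF \<open>0 < p\<close>, of \<alpha> c] p\<alpha> that by linarith
    qed
    ultimately show "(if ?q < c then hstar else if ?q = c then max (h c) hstar else h ?q) = h ?q"
      by auto
  qed
qed

end
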